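(* Assume $d>0$ and condition (L), and let $q>0$. For $T\in(0,\xi)$ let $\kappa_T$ be the maximal solution of $y'-y^2=-qr^2$ with $\kappa_T(T)=0$; it is defined on all of $(0,\xi)$. The family $(\kappa_T)_{T\in(0,\xi)}$ is increasing in $T$ (i.e. $\kappa_T\le\kappa_{T'}$ on $(0,\xi)$ for $T<T'$) and is bounded from above uniformly in $T$ by a finite function on $(0,\xi)$. Hence $w_q=\lim_{T\uparrow\xi}\kappa_T$ is well defined on $(0,\xi)$; moreover $w_q>0$ on $(0,\xi)$ and $\lim_{t\to\xi-}w_q(t)=0$.
   Context: Discrete setting. Fix $\rho>0$, $d\ge0$, $c>0$ and nonnegative reals $(\pi_k)_{k\ge1}$ with $\sum_k\pi_k=\rho$; $\bar\pi_k=\sum_{i\ge k}\pi_i$. Condition (L): $\sum_i\pi_i\log i<\infty$. $\psi(s)=d-(\rho+d)s+\sum_{i\ge1}\pi_is^{i+1}$, $m(s)=\int_s^1\frac{\psi(v)}{cv(1-v)}dv$ for $s\in(0,1]$, $\theta(s)=\int_s^1e^{m(v)}dv$, $\xi=\int_0^1e^{m(v)}dv\in(0,\infty]$, $\varphi:[0,\xi)\to(0,1]$ the inverse of $\theta$, and $r(s)=|\varphi'(s)|/\sqrt{c\varphi(s)(1-\varphi(s))}$ for $s\in(0,\xi)$. *)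

theory Defs
  imports "HOL-Analysis.Analysis"
begin

text \<open>The sequence (pi_k)_{k>=1} is a function pk :: nat => real of which only the
values at indices k >= 1 are used.\<close>

definition psi :: "real \<Rightarrow> real \<Rightarrow> (nat \<Rightarrow> real) \<Rightarrow> real \<Rightarrow> real" where
  "psi rho d pk s = d - (rho + d) * s + (\<Sum>i. pk (Suc i) * s ^ (Suc i + 1))"

definition mfun :: "real \<Rightarrow> real \<Rightarrow> real \<Rightarrow> (nat \<Rightarrow> real) \<Rightarrow> real \<Rightarrow> real" where
  "mfun rho d c pk s = integral {s..1} (\<lambda>v. psi rho d pk v / (c * v * (1 - v)))"

definition theta :: "real \<Rightarrow> real \<Rightarrow> real \<Rightarrow> (nat \<Rightarrow> real) \<Rightarrow> real \<Rightarrow> real" where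
  "theta rho d c pk s = integral {s..1} (\<lambda>v. exp (mfun rho d c pk v))"

definition xi :: "real \<Rightarrow> real \<Rightarrow> real \<Rightarrow> (nat \<Rightarrow> real) \<Rightarrow> ennreal" where
  "xi rho d c pk = (\<integral>\<^sup>+ v. ennreal (indicator {0<..1} v * exp (mfun rho d c pk v)) \<partial>lborel)"

definition Dom :: "real \<Rightarrow> real \<Rightarrow> real \<Rightarrow> (nat \<Rightarrow> real) \<Rightarrow> real set" where
  "Dom rho d c pk = {t. 0 < t \<and> ennreal t < xi rho d c pk}"

definition phi :: "real \<Rightarrow> real \<Rightarrow> real \<Rightarrow> (nat \<Rightarrow> real) \<Rightarrow> real \<Rightarrow> real" where
  "phi rho d c pk t = (THE s. s \<in> {0<..1} \<and> theta rho d c pk s = t)"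

definition rfun :: "real \<Rightarrow> real \<Rightarrow> real \<Rightarrow> (nat \<Rightarrow> real) \<Rightarrow> real \<Rightarrow> real" where
  "rfun rho d c pk t = \<bar>deriv (phi rho d c pk) t\<bar> /
      sqrt (c * phi rho d c pk t * (1 - phi rho d c pk t))"

definition to_xi :: "real \<Rightarrow> real \<Rightarrow> real \<Rightarrow> (nat \<Rightarrow> real) \<Rightarrow> real filter" where
  "to_xi rho d c pk = (if xi rho d c pk = \<infinity> then at_top else at_left (enn2real (xi rho d c pk)))"

definition riccati_sol :: "real \<Rightarrow> real \<Rightarrow> real \<Rightarrow> (nat \<Rightarrow> real) \<Rightarrow> real \<Rightarrow> real set \<Rightarrow> (real \<Rightarrow> real) \<Rightarrow> bool" where
  "riccati_sol rho d c pk q I y \<longleftrightarrow>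
     (\<forall>t\<in>I. (y has_real_derivative (y t ^ 2 - q * rfun rho d c pk t ^ 2)) (at t))"

end

theory Submission
  imports Defs "HOL-Real_Asymp.Real_Asymp"
begin

(* The Riccati equation y' = y^2 - p, with p = q r^2 > 0, is linearised by y = -u'/u, u'' = p u.
   The Neumann series of the linear problem with u(T) = 1, u'(T) = 0 converges locally uniformly
   and gives u >= 1, so kappa_T is defined on all of (0, xi).  For two solutions y1, y2 the
   function (y2 - y1) exp (- int (y1 + y2)) is constant, and a solution vanishing at T is positive
   before T and negative after it; hence kappa_T increases with T.  Condition (L) gives the bound
   m(s) >= -(d/c) ln s - L/c, which makes h = C phi^(d/c) / (1 - phi) a nonnegative supersolution:
   it dominates every kappa_T and tends to 0 at xi.  So w_q = sup_T kappa_T is the limit of the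
   family, it is positive because kappa_T(t) > 0 for T > t, and it is squeezed to 0 by h. *)

lemma Icc_subset_is_interval:
  fixes I :: "real set"
  assumes "is_interval I" "a \<in> I" "b \<in> I"
  shows "{a..b} \<subseteq> I"
  using assms unfolding is_interval_1 by (meson atLeastAtMost_iff subsetI)

lemma open_interval_obtain_Icc:
  fixes I :: "real set"
  assumes "open I" "is_interval I" "x \<in> I" "y \<in> I"
  obtains a b where "a < min x y" "max x y < b" "{a..b} \<subseteq> I"
proof -
  have "min x y \<in> I" "max x y \<in> I"
    using assms by (auto simp: min_def max_def)
  then obtain e1 e2 where e: "e1 > 0" "cball (min x y) e1 \<subseteq> I" "e2 > 0" "cball (max x y) e2 \<subseteq> I"
    using assms(1) open_contains_cball by metis
  then have "min x y - e1 \<in> I" "max x y + e2 \<in> I"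
    by (auto simp: dist_real_def)
  then have "{min x y - e1..max x y + e2} \<subseteq> I"
    using Icc_subset_is_interval[OF assms(2)] by blast
  then show ?thesis
    using e by (intro that[of "min x y - e1" "max x y + e2"]) auto
qed

lemma has_real_derivative_suminf_dominated:
  fixes f f' :: "nat \<Rightarrow> real \<Rightarrow> real"
  assumes S: "open S" "convex S"
    and deriv: "\<And>n x. x \<in> S \<Longrightarrow> (f n has_real_derivative f' n x) (at x)"
    and dominated: "\<And>n x. x \<in> S \<Longrightarrow> \<bar>f' n x\<bar> \<le> M n" and M: "summable M"
    and x0: "x0 \<in> S" "summable (\<lambda>n. f n x0)" and x: "x \<in> S"
  shows "((\<lambda>x. \<Sum>n. f n x) has_real_derivative (\<Sum>n. f' n x)) (at x)"
proof -
  have deriv_within: "\<And>n x. x \<in> S \<Longrightarrow> (f n has_field_derivative f' n x) (at x within S)"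
    using deriv by (rule has_field_derivative_at_within)
  have "uniformly_convergent_on S (\<lambda>n x. \<Sum>i<n. f' i x)"
    unfolding uniformly_convergent_on_def
    by (rule exI, rule Weierstrass_m_test_ev[OF _ M]) (use dominated in auto)
  moreover have "x \<in> interior S"
    using S(1) x by (simp add: interior_open)
  ultimately show ?thesis
    using has_field_derivative_series'(2)[OF S(2) deriv_within _ x0] by blast
qed

lemma tendsto_SUP_mono_family:
  fixes g :: "real \<Rightarrow> real"
  assumes mono: "\<And>T T'. T \<in> I \<Longrightarrow> T' \<in> I \<Longrightarrow> T < T' \<Longrightarrow> g T \<le> g T'"
    and bdd: "bdd_above (g ` I)" and "I \<noteq> {}"
    and F: "\<And>T0. T0 \<in> I \<Longrightarrow> eventually (\<lambda>T. T \<in> I \<and> T0 < T) F"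
  shows "(g \<longlongrightarrow> (SUP T\<in>I. g T)) F"
proof (rule order_tendstoI)
  fix a assume "a < (SUP T\<in>I. g T)"
  then obtain T0 where "T0 \<in> I" "a < g T0"
    using less_cSUP_iff[OF \<open>I \<noteq> {}\<close> bdd] by blast
  then show "eventually (\<lambda>T. a < g T) F"
    using mono by (intro eventually_mono[OF F[OF \<open>T0 \<in> I\<close>]]) fastforce
next
  fix a assume "(SUP T\<in>I. g T) < a"
  moreover obtain T0 where "T0 \<in> I"
    using \<open>I \<noteq> {}\<close> by blast
  ultimately show "eventually (\<lambda>T. g T < a) F"
    using cSUP_upper[OF _ bdd] by (intro eventually_mono[OF F[OF \<open>T0 \<in> I\<close>]]) fastforce
qed

lemma harm_Suc_le_one_plus_ln: "(\<Sum>j\<le>i. 1 / real (Suc j)) \<le> 1 + ln (real (Suc i))"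
proof -
  have "harm (Suc i) - ln (real (Suc i)) \<le> harm (Suc 0) - ln (real (Suc 0))"
    using decseq_harm_diff_ln[unfolded decseq_def, rule_format, of 0 i] by blast
  moreover have "harm (Suc 0) = (1::real)"
    by (simp add: harm_altdef)
  moreover have "harm (Suc i) = (\<Sum>j\<le>i. 1 / real (Suc j))"
    unfolding harm_altdef lessThan_Suc_atMost by (simp add: inverse_eq_divide)
  ultimately show ?thesis
    by simp
qed

lemma has_integral_power_Icc_1:
  assumes "s \<le> 1"
  shows "((\<lambda>v::real. v ^ j) has_integral (1 - s ^ Suc j) / Suc j) {s..1}"
proof -
  have "((\<lambda>v::real. v ^ j) has_integral (1 ^ Suc j / Suc j - s ^ Suc j / Suc j)) {s..1}"
  proof (rule fundamental_theorem_of_calculus[OF assms])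
    fix x assume "x \<in> {s..1}"
    have "((\<lambda>v. v ^ Suc j / Suc j) has_real_derivative (1 + real j) * (1 * x ^ j) / Suc j)
        (at x within {s..1})"
      by (intro DERIV_cdivide DERIV_power_Suc DERIV_ident)
    then show "((\<lambda>v. v ^ Suc j / Suc j) has_vector_derivative x ^ j) (at x within {s..1})"
      by (simp add: has_real_derivative_iff_has_vector_derivative)
  qed
  then show ?thesis
    by (simp add: diff_divide_distrib)
qed

lemma has_real_derivative_powr_div_one_minus:
  fixes a v :: real
  assumes "0 < v" "v < 1"
  shows "((\<lambda>v. v powr a / (1 - v)) has_real_derivative
      a * v powr a / (v * (1 - v)) + v powr a / (1 - v)\<^sup>2) (at v)"
proof -
  define P where "P = v powr a"
  have "((\<lambda>v. v powr a / (1 - v)) has_real_derivative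
      (a * v powr (a - 1) * (1 - v) - v powr a * (0 - 1)) / ((1 - v) * (1 - v))) (at v)"
    using assms by (intro DERIV_divide has_real_derivative_powr DERIV_diff DERIV_const DERIV_ident) auto
  moreover have "v powr (a - 1) = P / v"
    using assms by (simp add: P_def powr_diff)
  moreover have "(a * (P / v) * w - P * (0 - 1)) / (w * w) = a * P / (v * w) + P / w\<^sup>2"
    if "w \<noteq> 0" for w
    using that assms by (simp add: field_simps power2_eq_square)
  ultimately show ?thesis
    using assms by (simp add: P_def)
qed

section \<open>Oriented integrals\<close>

definition oriented_integral :: "real \<Rightarrow> real \<Rightarrow> (real \<Rightarrow> real) \<Rightarrow> real" where
  "oriented_integral T t f = (if T \<le> t then integral {T..t} f else - integral {t..T} f)"

lemma oriented_integral_self [simp]: "oriented_integral T T f = 0"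
  by (simp add: oriented_integral_def)

lemma oriented_integral_eq_diff:
  assumes "f integrable_on {a..b}" "T \<in> {a..b}" "t \<in> {a..b}"
  shows "oriented_integral T t f = integral {a..t} f - integral {a..T} f"
proof (cases "T \<le> t")
  case True
  have "integral {a..T} f + integral {T..t} f = integral {a..t} f"
    using assms True by (intro Henstock_Kurzweil_Integration.integral_combine) (auto intro: integrable_subinterval_real)
  then show ?thesis
    using True by (simp add: oriented_integral_def)
next
  case False
  have "integral {a..t} f + integral {t..T} f = integral {a..T} f"
    using assms False by (intro Henstock_Kurzweil_Integration.integral_combine) (auto intro: integrable_subinterval_real)
  then show ?thesis
    using False by (simp add: oriented_integral_def)
qed

lemma has_real_derivative_oriented_integral:
  fixes I :: "real set"
  assumes I: "open I" "is_interval I" and f: "continuous_on I f" and "T \<in> I" "t \<in> I"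
  shows "((\<lambda>x. oriented_integral T x f) has_real_derivative f t) (at t)"
proof -
  obtain a b where ab: "a < min T t" "max T t < b" "{a..b} \<subseteq> I"
    using open_interval_obtain_Icc[OF I \<open>T \<in> I\<close> \<open>t \<in> I\<close>] .
  have f_ab: "continuous_on {a..b} f"
    using continuous_on_subset[OF f ab(3)] .
  have "((\<lambda>x. integral {a..x} f) has_vector_derivative f t) (at t within {a..b})"
    using ab by (intro integral_has_vector_derivative[OF f_ab]) auto
  then have "((\<lambda>x. integral {a..x} f) has_real_derivative f t) (at t)"
    using ab by (simp add: has_real_derivative_iff_has_vector_derivative at_within_Icc_at)
  then have "((\<lambda>x. integral {a..x} f - integral {a..T} f) has_real_derivative f t) (at t)"
    by (rule DERIV_diff[OF _ DERIV_const, simplified])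
  then show ?thesis
  proof (rule has_field_derivative_transform_within_open)
    show "open {a<..<b}" "t \<in> {a<..<b}"
      using ab by auto
    show "integral {a..x} f - integral {a..T} f = oriented_integral T x f" if "x \<in> {a<..<b}" for x
      using oriented_integral_eq_diff[OF integrable_continuous_real[OF f_ab], of T x] ab that by simp
  qed
qed

lemma continuous_on_has_antiderivative:
  fixes I :: "real set"
  assumes "open I" "is_interval I" "continuous_on I f"
  obtains G where "\<And>x. x \<in> I \<Longrightarrow> (G has_real_derivative f x) (at x)"
proof (cases "I = {}")
  case False
  then obtain T where "T \<in> I"
    by blast
  then show ?thesis
    using has_real_derivative_oriented_integral[OF assms] that by blast
qed simp

lemma abs_oriented_integral_le:
  assumes "continuous_on {min T t..max T t} f" "continuous_on {min T t..max T t} g"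
    and "\<And>s. s \<in> {min T t..max T t} \<Longrightarrow> \<bar>f s\<bar> \<le> g s"
  shows "\<bar>oriented_integral T t f\<bar> \<le> integral {min T t..max T t} g"
  using assms integral_norm_bound_integral[of f "{min T t..max T t}" g]
  by (auto simp: oriented_integral_def integrable_continuous_real min_def max_def split: if_splits)

lemma oriented_integral_nonneg:
  assumes "continuous_on {min T t..max T t} f"
    and "\<And>s. s \<in> {min T t..max T t} \<Longrightarrow> (T \<le> s \<longrightarrow> 0 \<le> f s) \<and> (s \<le> T \<longrightarrow> f s \<le> 0)"
  shows "0 \<le> oriented_integral T t f"
proof (cases "T \<le> t")
  case True
  then show ?thesis
    using assms by (auto simp: oriented_integral_def intro!: integral_nonneg integrable_continuous_real)
next
  case False
  have "integral {t..T} f \<le> integral {t..T} (\<lambda>_. 0)"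
    using assms False by (intro integral_le) (auto simp: integrable_continuous_real)
  then show ?thesis
    using False by (simp add: oriented_integral_def)
qed

lemma oriented_integral_sign:
  assumes "continuous_on {min T t..max T t} f" and "\<And>s. s \<in> {min T t..max T t} \<Longrightarrow> 0 \<le> f s"
  shows "(T \<le> t \<longrightarrow> 0 \<le> oriented_integral T t f) \<and> (t \<le> T \<longrightarrow> oriented_integral T t f \<le> 0)"
  using assms
  by (auto simp: oriented_integral_def min_def max_def intro!: integral_nonneg integrable_continuous_real)

lemma integral_abs_power_dist_over_fact:
  fixes T t :: real
  shows "integral {min T t..max T t} (\<lambda>s. \<bar>s - T\<bar> ^ n / fact n) = \<bar>t - T\<bar> ^ Suc n / fact (Suc n)"
proof (cases "T \<le> t")
  case True
  have "((\<lambda>s. \<bar>s - T\<bar> ^ n / fact n) has_integral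
      (t - T) ^ Suc n / fact (Suc n) - (T - T) ^ Suc n / fact (Suc n)) {T..t}"
  proof (intro fundamental_theorem_of_calculus True)
    fix x assume "x \<in> {T..t}"
    have "((\<lambda>s. (s - T) ^ Suc n / fact (Suc n)) has_real_derivative
        (1 + real n) * ((1 - 0) * (x - T) ^ n) / fact (Suc n)) (at x within {T..t})"
      by (intro DERIV_cdivide DERIV_power_Suc DERIV_diff DERIV_ident DERIV_const)
    then show "((\<lambda>s. (s - T) ^ Suc n / fact (Suc n)) has_vector_derivative \<bar>x - T\<bar> ^ n / fact n)
        (at x within {T..t})"
      using \<open>x \<in> {T..t}\<close> by (simp add: has_real_derivative_iff_has_vector_derivative)
  qed
  then show ?thesis
    using True by (simp add: integral_unique del: integral_divide)
next
  case False
  have "((\<lambda>s. \<bar>s - T\<bar> ^ n / fact n) has_integral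
      - ((T - T) ^ Suc n / fact (Suc n)) - - ((T - t) ^ Suc n / fact (Suc n))) {t..T}"
  proof (intro fundamental_theorem_of_calculus)
    fix x assume "x \<in> {t..T}"
    have "((\<lambda>s. - ((T - s) ^ Suc n / fact (Suc n))) has_real_derivative
        - ((1 + real n) * ((0 - 1) * (T - x) ^ n) / fact (Suc n))) (at x within {t..T})"
      by (intro DERIV_minus DERIV_cdivide DERIV_power_Suc DERIV_diff DERIV_ident DERIV_const)
    moreover have "- ((1 + real n) * ((0 - 1) * (T - x) ^ n) / fact (Suc n)) = \<bar>x - T\<bar> ^ n / fact n"
      using \<open>x \<in> {t..T}\<close> by simp
    ultimately show "((\<lambda>s. - ((T - s) ^ Suc n / fact (Suc n))) has_vector_derivative \<bar>x - T\<bar> ^ n / fact n)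
        (at x within {t..T})"
      by (simp add: has_real_derivative_iff_has_vector_derivative)
  qed (use False in auto)
  then have "integral {t..T} (\<lambda>s. \<bar>s - T\<bar> ^ n / fact n) = (T - t) ^ Suc n / fact (Suc n)"
    by (simp add: integral_unique del: integral_divide)
  moreover have "min T t = t" "max T t = T" "\<bar>t - T\<bar> = T - t"
    using False by auto
  ultimately show ?thesis
    by (simp only:)
qed

section \<open>Global solutions of the Riccati equation\<close>

text \<open>The successive terms of the Neumann series of \<open>u' = v, v' = p u, u T = 1, v T = 0\<close>.\<close>

primrec picard_terms :: "(real \<Rightarrow> real) \<Rightarrow> real \<Rightarrow> nat \<Rightarrow> (real \<Rightarrow> real) \<times> (real \<Rightarrow> real)" where
  "picard_terms p T 0 = ((\<lambda>_. 1), (\<lambda>_. 0))"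
| "picard_terms p T (Suc n) =
     ((\<lambda>t. oriented_integral T t (snd (picard_terms p T n))),
      (\<lambda>t. oriented_integral T t (\<lambda>s. p s * fst (picard_terms p T n) s)))"

locale linear_second_order =
  fixes I :: "real set" and p :: "real \<Rightarrow> real" and T :: real
  assumes open_I: "open I" and interval_I: "is_interval I"
    and p_cont: "continuous_on I p" and p_nonneg: "\<And>x. x \<in> I \<Longrightarrow> 0 \<le> p x"
    and T_in: "T \<in> I"
begin

abbreviation "U n \<equiv> fst (picard_terms p T n)"
abbreviation "V n \<equiv> snd (picard_terms p T n)"

definition "u t = 1 + (\<Sum>n. U (Suc n) t)"
definition "v t = (\<Sum>n. V (Suc n) t)"

lemma between_T_subset: "t \<in> I \<Longrightarrow> {min T t..max T t} \<subseteq> I"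
  using Icc_subset_is_interval[OF interval_I] T_in by (auto simp: min_def max_def)

lemma continuous_on_picard_terms: "continuous_on I (U n) \<and> continuous_on I (V n)"
proof (induction n)
  case (Suc n)
  have "continuous_on I (\<lambda>s. p s * U n s)"
    using Suc p_cont by (intro continuous_intros) auto
  then have "isCont (U (Suc n)) t \<and> isCont (V (Suc n)) t" if "t \<in> I" for t
    using has_real_derivative_oriented_integral[OF open_I interval_I _ T_in that, THEN DERIV_isCont]
      conjunct2[OF Suc] by simp
  then show ?case
    by (auto intro!: continuous_at_imp_continuous_on)
qed simp

lemma continuous_on_p_U: "continuous_on I (\<lambda>s. p s * U n s)"
  using continuous_on_picard_terms p_cont by (intro continuous_intros) auto

lemma has_real_derivative_U: "t \<in> I \<Longrightarrow> (U (Suc n) has_real_derivative V n t) (at t)"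
  using has_real_derivative_oriented_integral[OF open_I interval_I
      conjunct2[OF continuous_on_picard_terms] T_in]
  by simp

lemma has_real_derivative_V: "t \<in> I \<Longrightarrow> (V (Suc n) has_real_derivative p t * U n t) (at t)"
  using has_real_derivative_oriented_integral[OF open_I interval_I continuous_on_p_U T_in]
  by simp

lemma picard_terms_sign:
  "t \<in> I \<Longrightarrow> 0 \<le> U n t \<and> (T \<le> t \<longrightarrow> 0 \<le> V n t) \<and> (t \<le> T \<longrightarrow> V n t \<le> 0)"
proof (induction n arbitrary: t)
  case (Suc n)
  have between: "s \<in> I" if "s \<in> {min T t..max T t}" for s
    using between_T_subset[OF Suc.prems] that by blast
  have "0 \<le> oriented_integral T t (V n)"
  proof (rule oriented_integral_nonneg)
    show "continuous_on {min T t..max T t} (V n)"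
      using continuous_on_picard_terms between_T_subset[OF Suc.prems] by (blast intro: continuous_on_subset)
  qed (use Suc.IH between in blast)
  moreover have "(T \<le> t \<longrightarrow> 0 \<le> oriented_integral T t (\<lambda>s. p s * U n s)) \<and>
      (t \<le> T \<longrightarrow> oriented_integral T t (\<lambda>s. p s * U n s) \<le> 0)"
  proof (rule oriented_integral_sign)
    show "continuous_on {min T t..max T t} (\<lambda>s. p s * U n s)"
      using continuous_on_p_U between_T_subset[OF Suc.prems] by (blast intro: continuous_on_subset)
  qed (use Suc.IH between p_nonneg in simp)
  ultimately show ?case
    by simp
qed simp

lemma picard_terms_bound:
  assumes ab: "{a..b} \<subseteq> I" "T \<in> {a..b}" and C: "1 \<le> C" "\<And>x. x \<in> {a..b} \<Longrightarrow> p x \<le> C"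
    and t: "t \<in> {a..b}"
  shows "\<bar>U n t\<bar> \<le> C ^ n * (\<bar>t - T\<bar> ^ n / fact n) \<and> \<bar>V n t\<bar> \<le> C ^ n * (\<bar>t - T\<bar> ^ n / fact n)"
  using t
proof (induction n arbitrary: t)
  case (Suc n)
  have between: "{min T t..max T t} \<subseteq> {a..b}"
    using Suc.prems ab(2) by auto
  then have between_I: "{min T t..max T t} \<subseteq> I"
    using ab(1) by blast
  have integral_bound: "integral {min T t..max T t} (\<lambda>s. K * (\<bar>s - T\<bar> ^ n / fact n))
      = K * (\<bar>t - T\<bar> ^ Suc n / fact (Suc n))" for K
    by (simp only: integral_mult_right integral_abs_power_dist_over_fact)
  have "\<bar>V n s\<bar> \<le> C ^ n * (\<bar>s - T\<bar> ^ n / fact n)" if "s \<in> {min T t..max T t}" for s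
    using Suc.IH between that by blast
  then have "\<bar>oriented_integral T t (V n)\<bar> \<le> C ^ n * (\<bar>t - T\<bar> ^ Suc n / fact (Suc n))"
    unfolding integral_bound[symmetric]
    using continuous_on_subset[OF conjunct2[OF continuous_on_picard_terms] between_I]
    by (intro abs_oriented_integral_le continuous_intros) auto
  also have "\<dots> \<le> C ^ Suc n * (\<bar>t - T\<bar> ^ Suc n / fact (Suc n))"
    using C(1) by (intro mult_right_mono) auto
  finally have U_bound: "\<bar>U (Suc n) t\<bar> \<le> C ^ Suc n * (\<bar>t - T\<bar> ^ Suc n / fact (Suc n))"
    by simp
  have "\<bar>p s * U n s\<bar> \<le> C ^ Suc n * (\<bar>s - T\<bar> ^ n / fact n)" if "s \<in> {min T t..max T t}" for s
  proof -
    have "s \<in> {a..b}" "s \<in> I"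
      using that between between_I by auto
    then have "\<bar>p s\<bar> * \<bar>U n s\<bar> \<le> C * (C ^ n * (\<bar>s - T\<bar> ^ n / fact n))"
      using Suc.IH C p_nonneg by (intro mult_mono) auto
    then show ?thesis
      by (simp add: abs_mult)
  qed
  then have "\<bar>V (Suc n) t\<bar> \<le> C ^ Suc n * (\<bar>t - T\<bar> ^ Suc n / fact (Suc n))"
    unfolding integral_bound[symmetric] using between_I
    by (simp only: picard_terms.simps snd_conv)
      (intro abs_oriented_integral_le continuous_on_subset[OF continuous_on_p_U] continuous_intros; auto)
  with U_bound show ?case
    by blast
qed simp

lemma picard_terms_dominated:
  assumes ab: "{a..b} \<subseteq> I" "T \<in> {a..b}"
  obtains M where "summable M"
    and "\<And>n x. x \<in> {a..b} \<Longrightarrow> \<bar>U n x\<bar> \<le> M n \<and> \<bar>V n x\<bar> \<le> M n \<and> \<bar>p x * U n x\<bar> \<le> M n"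
proof -
  obtain C where C: "1 \<le> C" "\<And>x. x \<in> {a..b} \<Longrightarrow> p x \<le> C"
  proof -
    have "bounded (p ` {a..b})"
      using ab(1) by (intro compact_imp_bounded compact_continuous_image continuous_on_subset[OF p_cont]) auto
    then obtain B where "\<forall>x\<in>{a..b}. \<bar>p x\<bar> \<le> B"
      unfolding bounded_iff by auto
    then show ?thesis
      by (intro that[of "max 1 B"]) force+
  qed
  define B where "B n = (C * (b - a)) ^ n / fact n" for n
  have "summable (\<lambda>n. C * B n)"
    using summable_exp[of "C * (b - a)"]
    by (intro summable_mult) (simp add: B_def divide_inverse mult.commute)
  moreover have "\<bar>U n x\<bar> \<le> C * B n \<and> \<bar>V n x\<bar> \<le> C * B n \<and> \<bar>p x * U n x\<bar> \<le> C * B n"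
    if x: "x \<in> {a..b}" for n x
  proof -
    have "\<bar>x - T\<bar> ^ n \<le> (b - a) ^ n"
      using x ab(2) by (intro power_mono) auto
    then have "C ^ n * (\<bar>x - T\<bar> ^ n / fact n) \<le> C ^ n * ((b - a) ^ n / fact n)"
      using C(1) by (intro mult_left_mono divide_right_mono) auto
    also have "\<dots> = B n"
      by (simp add: B_def power_mult_distrib)
    finally have "C ^ n * (\<bar>x - T\<bar> ^ n / fact n) \<le> B n" .
    then have UV: "\<bar>U n x\<bar> \<le> B n" "\<bar>V n x\<bar> \<le> B n"
      using picard_terms_bound[OF ab C x, of n] by linarith+
    moreover have "B n \<le> C * B n"
      using mult_right_mono[OF C(1), of "B n"] ab(2) C(1) by (simp add: B_def)
    moreover have "\<bar>p x\<bar> * \<bar>U n x\<bar> \<le> C * B n"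
      using UV C(2)[OF x] p_nonneg[of x] x ab(1) by (intro mult_mono) auto
    ultimately show ?thesis
      by (simp add: abs_mult)
  qed
  ultimately show ?thesis
    using that by blast
qed

lemma picard_terms_locally_dominated:
  assumes "t \<in> I"
  obtains S M where "open S" "convex S" "t \<in> S" "S \<subseteq> I" "summable M"
    and "\<And>n x. x \<in> S \<Longrightarrow> \<bar>U n x\<bar> \<le> M n \<and> \<bar>V n x\<bar> \<le> M n \<and> \<bar>p x * U n x\<bar> \<le> M n"
proof -
  obtain a b where ab: "a < min T t" "max T t < b" "{a..b} \<subseteq> I"
    using open_interval_obtain_Icc[OF open_I interval_I T_in assms] .
  moreover have "T \<in> {a..b}"
    using ab by auto
  ultimately obtain M where "summable M"
    and "\<And>n x. x \<in> {a..b} \<Longrightarrow> \<bar>U n x\<bar> \<le> M n \<and> \<bar>V n x\<bar> \<le> M n \<and> \<bar>p x * U n x\<bar> \<le> M n"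
    using picard_terms_dominated by blast
  with ab show ?thesis
    by (intro that[of "{a<..<b}" M]) auto
qed

lemma u_v_solve:
  assumes t: "t \<in> I"
  shows "(u has_real_derivative v t) (at t)" "(v has_real_derivative p t * u t) (at t)" "1 \<le> u t"
proof -
  obtain S M where S: "open S" "convex S" "t \<in> S" "S \<subseteq> I" and M: "summable M"
    and bound: "\<And>n x. x \<in> S \<Longrightarrow> \<bar>U n x\<bar> \<le> M n \<and> \<bar>V n x\<bar> \<le> M n \<and> \<bar>p x * U n x\<bar> \<le> M n"
    using picard_terms_locally_dominated[OF t] by blast
  have bound_S: "\<bar>U n x\<bar> \<le> M n" "\<bar>V n x\<bar> \<le> M n" "\<bar>p x * U n x\<bar> \<le> M n" if "x \<in> S" for n x
    using bound[OF that] by auto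
  have summable: "summable (\<lambda>n. U n x)" "summable (\<lambda>n. V n x)" if "x \<in> S" for x
    using bound_S[OF that] by (auto intro!: summable_comparison_test'[OF M])
  have summable_Suc: "summable (\<lambda>n. U (Suc n) x)" "summable (\<lambda>n. V (Suc n) x)" if "x \<in> S" for x
    using summable_Suc_iff[THEN iffD2, OF summable(1)[OF that]]
      summable_Suc_iff[THEN iffD2, OF summable(2)[OF that]] by blast+
  have dU: "\<And>n x. x \<in> S \<Longrightarrow> (U (Suc n) has_real_derivative V n x) (at x)"
    using has_real_derivative_U S(4) by blast
  have "((\<lambda>x. \<Sum>n. U (Suc n) x) has_real_derivative (\<Sum>n. V n t)) (at t)"
    by (rule has_real_derivative_suminf_dominated[OF S(1,2) dU bound_S(2) M S(3) summable_Suc(1)[OF S(3)] S(3)])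
  then have "((\<lambda>x. 1 + (\<Sum>n. U (Suc n) x)) has_real_derivative 0 + (\<Sum>n. V n t)) (at t)"
    by (rule DERIV_add[OF DERIV_const])
  moreover have "(\<Sum>n. V n t) = v t"
    using suminf_split_head[OF summable(2)[OF S(3)]] by (simp add: v_def)
  ultimately show "(u has_real_derivative v t) (at t)"
    by (simp add: u_def[abs_def])
  have dV: "\<And>n x. x \<in> S \<Longrightarrow> (V (Suc n) has_real_derivative p x * U n x) (at x)"
    using has_real_derivative_V S(4) by blast
  have "(v has_real_derivative (\<Sum>n. p t * U n t)) (at t)"
    unfolding v_def[abs_def]
    by (rule has_real_derivative_suminf_dominated[OF S(1,2) dV bound_S(3) M S(3) summable_Suc(2)[OF S(3)] S(3)])
  moreover have "(\<Sum>n. p t * U n t) = p t * u t"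
    using suminf_mult[OF summable(1)[OF S(3)]] suminf_split_head[OF summable(1)[OF S(3)]]
    by (simp add: u_def)
  ultimately show "(v has_real_derivative p t * u t) (at t)"
    by simp
  have "0 \<le> (\<Sum>n. U (Suc n) t)"
    using picard_terms_sign[OF t] by (intro suminf_nonneg[OF summable_Suc(1)[OF S(3)]]) blast
  then show "1 \<le> u t"
    by (simp add: u_def)
qed

lemma riccati_solution_exists:
  "\<exists>y. (\<forall>t\<in>I. (y has_real_derivative y t ^ 2 - p t) (at t)) \<and> y T = 0"
proof -
  define y where "y t = - (v t / u t)" for t
  have "(y has_real_derivative y t ^ 2 - p t) (at t)" if t: "t \<in> I" for t
  proof -
    have "u t \<noteq> 0"
      using u_v_solve(3)[OF t] by simp
    then have "((\<lambda>x. - (v x / u x)) has_real_derivative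
        - ((p t * u t * u t - v t * v t) / (u t * u t))) (at t)"
      using u_v_solve(1,2)[OF t] by (intro DERIV_minus DERIV_divide)
    moreover have "- ((p t * u t * u t - v t * v t) / (u t * u t)) = y t ^ 2 - p t"
      using \<open>u t \<noteq> 0\<close> by (simp add: y_def field_simps power2_eq_square)
    ultimately show ?thesis
      by (simp add: y_def[abs_def])
  qed
  moreover have "y T = 0"
    by (simp add: y_def v_def)
  ultimately show ?thesis
    by blast
qed

end

section \<open>Comparison of solutions of the Riccati equation\<close>

locale riccati =
  fixes I :: "real set" and p :: "real \<Rightarrow> real"
  assumes open_I: "open I" and interval_I: "is_interval I" and p_pos: "\<And>x. x \<in> I \<Longrightarrow> 0 < p x"
begin

definition solves :: "(real \<Rightarrow> real) \<Rightarrow> bool" where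
  "solves y \<longleftrightarrow> (\<forall>t\<in>I. (y has_real_derivative y t ^ 2 - p t) (at t))"

lemma solves_continuous_on: "solves y \<Longrightarrow> continuous_on I y"
  unfolding solves_def by (meson DERIV_isCont continuous_at_imp_continuous_on)

text \<open>With \<open>G' = y\<close>, the function \<open>y e\<^sup>-\<^sup>G\<close> has derivative \<open>- p e\<^sup>-\<^sup>G < 0\<close>.\<close>

lemma solves_sign:
  assumes y: "solves y" and T: "T \<in> I" "y T = 0" and t: "t \<in> I"
  shows "T < t \<Longrightarrow> y t < 0" and "t < T \<Longrightarrow> 0 < y t"
proof -
  obtain G where G: "\<And>x. x \<in> I \<Longrightarrow> (G has_real_derivative y x) (at x)"
    using continuous_on_has_antiderivative[OF open_I interval_I solves_continuous_on[OF y]] by blast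
  define z where "z x = y x * exp (- G x)" for x
  have z_deriv: "\<exists>d. (z has_real_derivative d) (at x) \<and> d < 0" if "x \<in> I" for x
  proof -
    have "(z has_real_derivative (y x ^ 2 - p x) * exp (- G x) + y x * (exp (- G x) * - y x)) (at x)"
      unfolding z_def[abs_def] using y G that
      by (auto simp: solves_def intro!: derivative_eq_intros)
    moreover have "(y x ^ 2 - p x) * exp (- G x) + y x * (exp (- G x) * - y x) < 0"
      using p_pos[OF that] by (simp add: algebra_simps power2_eq_square)
    ultimately show ?thesis
      by blast
  qed
  show "y t < 0" if "T < t"
  proof -
    have "z t < z T"
      using Icc_subset_is_interval[OF interval_I T(1) t] z_deriv
      by (intro DERIV_neg_imp_decreasing[OF that]) auto
    then show ?thesis
      using T(2) by (simp add: z_def mult_less_0_iff)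
  qed
  show "0 < y t" if "t < T"
  proof -
    have "z T < z t"
      using Icc_subset_is_interval[OF interval_I t T(1)] z_deriv
      by (intro DERIV_neg_imp_decreasing[OF that]) auto
    then show ?thesis
      using T(2) by (simp add: z_def zero_less_mult_iff)
  qed
qed

text \<open>With \<open>G' = y\<^sub>1 + y\<^sub>2\<close>, the function \<open>(y\<^sub>2 - y\<^sub>1) e\<^sup>-\<^sup>G\<close> is constant.\<close>

lemma solves_strict_mono_zero:
  assumes y1: "solves y1" "T1 \<in> I" "y1 T1 = 0" and y2: "solves y2" "T2 \<in> I" "y2 T2 = 0"
    and "T1 < T2" and t: "t \<in> I"
  shows "y1 t < y2 t"
proof -
  have "continuous_on I (\<lambda>x. y1 x + y2 x)"
    using solves_continuous_on[OF y1(1)] solves_continuous_on[OF y2(1)] by (intro continuous_intros)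
  then obtain G where G: "\<And>x. x \<in> I \<Longrightarrow> (G has_real_derivative y1 x + y2 x) (at x)"
    using continuous_on_has_antiderivative[OF open_I interval_I] by blast
  define z where "z x = (y2 x - y1 x) * exp (- G x)" for x
  have "(z has_real_derivative 0) (at x within I)" if "x \<in> I" for x
  proof -
    have "(z has_real_derivative ((y2 x ^ 2 - p x) - (y1 x ^ 2 - p x)) * exp (- G x)
        + (y2 x - y1 x) * (exp (- G x) * - (y1 x + y2 x))) (at x)"
      unfolding z_def[abs_def] using y1(1) y2(1) G that
      by (auto simp: solves_def intro!: derivative_eq_intros)
    then show ?thesis
      by (auto simp: algebra_simps power2_eq_square intro: has_field_derivative_at_within)
  qed
  then obtain k where k: "\<And>x. x \<in> I \<Longrightarrow> z x = k"
    using has_field_derivative_zero_constant[OF is_interval_convex[OF interval_I]] by blast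
  have "0 < z T2"
    using solves_sign(1)[OF y1 y2(2) \<open>T1 < T2\<close>] y2(3) by (simp add: z_def mult_neg_pos)
  then have "0 < z t"
    using k[OF t] k[OF y2(2)] by simp
  then show ?thesis
    by (simp add: z_def zero_less_mult_iff)
qed

lemma solves_le_supersolution:
  assumes y: "solves y" "T \<in> I" "y T = 0" and t: "t \<in> I"
    and h: "\<And>x. x \<in> I \<Longrightarrow> \<exists>h'. (h has_real_derivative h') (at x) \<and> h' \<le> - p x"
    and h_nonneg: "\<And>x. x \<in> I \<Longrightarrow> 0 \<le> h x"
  shows "y t \<le> h t"
proof (cases "T < t")
  case True
  then show ?thesis
    using solves_sign(1)[OF y t] h_nonneg[OF t] by simp
next
  case False
  have "h T - y T \<le> h t - y t"
  proof (rule DERIV_nonpos_imp_nonincreasing[where f = "\<lambda>x. h x - y x"])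
    show "t \<le> T"
      using False by simp
    fix x assume "t \<le> x" "x \<le> T"
    then have x: "x \<in> I"
      using Icc_subset_is_interval[OF interval_I t y(2)] by auto
    then obtain h' where h': "(h has_real_derivative h') (at x)" "h' \<le> - p x"
      using h by blast
    have "((\<lambda>x. h x - y x) has_real_derivative h' - (y x ^ 2 - p x)) (at x)"
      using h'(1) y(1) x by (auto simp: solves_def intro!: DERIV_diff)
    moreover have "h' - (y x ^ 2 - p x) \<le> 0"
      using h'(2) zero_le_power2[of "y x"] by linarith
    ultimately show "\<exists>d. ((\<lambda>x. h x - y x) has_real_derivative d) (at x) \<and> d \<le> 0"
      by blast
  qed
  then show ?thesis
    using y(3) h_nonneg[OF y(2)] by simp
qed

lemma solutions_tendsto:
  assumes sol: "\<And>T. T \<in> I \<Longrightarrow> solves (\<kappa> T) \<and> \<kappa> T T = 0" and "I \<noteq> {}"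
    and h: "\<And>x. x \<in> I \<Longrightarrow> \<exists>h'. (h has_real_derivative h') (at x) \<and> h' \<le> - p x"
    and h_nonneg: "\<And>x. x \<in> I \<Longrightarrow> 0 \<le> h x"
    and F: "\<And>T0. T0 \<in> I \<Longrightarrow> eventually (\<lambda>T. T \<in> I \<and> T0 < T) F" and h_lim: "(h \<longlongrightarrow> 0) F"
  shows "\<exists>w. (\<forall>t\<in>I. ((\<lambda>T. \<kappa> T t) \<longlongrightarrow> w t) F) \<and> (\<forall>t\<in>I. 0 < w t) \<and> (w \<longlongrightarrow> 0) F"
proof -
  define w where "w t = (SUP T\<in>I. \<kappa> T t)" for t
  have le_h: "\<kappa> T t \<le> h t" if "T \<in> I" "t \<in> I" for T t
    using sol that by (intro solves_le_supersolution[OF _ _ _ _ h h_nonneg]) auto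
  then have bdd: "bdd_above ((\<lambda>T. \<kappa> T t) ` I)" if "t \<in> I" for t
    using that by (intro bdd_aboveI2) auto
  have lim: "((\<lambda>T. \<kappa> T t) \<longlongrightarrow> w t) F" if "t \<in> I" for t
    unfolding w_def using sol solves_strict_mono_zero that
    by (intro tendsto_SUP_mono_family[OF _ bdd \<open>I \<noteq> {}\<close> F]) (auto intro: less_imp_le)
  have pos: "0 < w t" if t: "t \<in> I" for t
  proof -
    obtain e where "e > 0" "ball t e \<subseteq> I"
      using open_I t open_contains_ball by blast
    then have "t + e / 2 \<in> I"
      by (auto simp: dist_real_def)
    then have "0 < \<kappa> (t + e / 2) t" "\<kappa> (t + e / 2) t \<le> w t"
      using sol solves_sign(2) t \<open>e > 0\<close> cSUP_upper[OF _ bdd[OF t]] by (auto simp: w_def)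
    then show ?thesis
      by linarith
  qed
  obtain T0 where "T0 \<in> I"
    using \<open>I \<noteq> {}\<close> by blast
  have "w t \<le> h t" if "t \<in> I" for t
    using le_h that \<open>I \<noteq> {}\<close> unfolding w_def by (intro cSUP_least) auto
  then have "(w \<longlongrightarrow> 0) F"
    using pos
    by (intro tendsto_sandwich[OF _ _ tendsto_const h_lim] eventually_mono[OF F[OF \<open>T0 \<in> I\<close>]])
      (auto intro: less_imp_le)
  then show ?thesis
    using lim pos by blast
qed

end

section \<open>The functions m, \<theta>, \<phi> and r\<close>

text \<open>The generating function \<open>\<Sum>\<^sub>k \<pi>\<^sub>k (1 + v + \<dots> + v\<^sup>k\<^sup>-\<^sup>1)\<close> of the tails \<open>\<pi>\<^sub>j\<^sub>+\<^sub>1 + \<pi>\<^sub>j\<^sub>+\<^sub>2 + \<dots>\<close>;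
  at \<open>v = 1\<close>, where the series may diverge, it is set to \<open>0\<close>.\<close>

definition tail_gf :: "(nat \<Rightarrow> real) \<Rightarrow> real \<Rightarrow> real" where
  "tail_gf pk v = (if v < 1 then \<Sum>i. pk (Suc i) * (\<Sum>j\<le>i. v ^ j) else 0)"

locale psi_setting =
  fixes rho d c :: real and pk :: "nat \<Rightarrow> real"
  assumes d_pos: "d > 0" and c_pos: "c > 0"
    and pi_nonneg: "\<And>k. k \<ge> 1 \<Longrightarrow> pk k \<ge> 0"
    and pi_sums: "(\<lambda>i. pk (Suc i)) sums rho"
    and condL: "summable (\<lambda>i. pk (Suc i) * ln (real (Suc i)))"
begin

abbreviation "m \<equiv> mfun rho d c pk"
abbreviation "\<theta> \<equiv> theta rho d c pk"
abbreviation "\<phi> \<equiv> phi rho d c pk"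
abbreviation "X \<equiv> xi rho d c pk"
abbreviation "D \<equiv> Dom rho d c pk"

definition "log_moment = rho + (\<Sum>i. pk (Suc i) * ln (real (Suc i)))"

lemma pk_Suc_nonneg: "0 \<le> pk (Suc i)"
  using pi_nonneg by simp

lemma summable_pk_power:
  assumes "0 \<le> v" "v \<le> 1"
  shows "summable (\<lambda>i. pk (Suc i) * v ^ Suc i)"
proof (rule summable_comparison_test'[OF sums_summable[OF pi_sums]])
  fix n
  have "pk (Suc n) * v ^ Suc n \<le> pk (Suc n)"
    by (rule mult_left_le[OF power_le_one[OF assms] pk_Suc_nonneg])
  then show "norm (pk (Suc n) * v ^ Suc n) \<le> pk (Suc n)"
    using pk_Suc_nonneg[of n] assms by simp
qed

lemma tail_gf_sums:
  assumes "0 \<le> v" "v < 1"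
  shows "(\<lambda>i. pk (Suc i) * (\<Sum>j\<le>i. v ^ j)) sums ((rho - (\<Sum>i. pk (Suc i) * v ^ Suc i)) / (1 - v))"
proof -
  have "(\<lambda>i. (pk (Suc i) - pk (Suc i) * v ^ Suc i) / (1 - v)) sums
      ((rho - (\<Sum>i. pk (Suc i) * v ^ Suc i)) / (1 - v))"
    using assms by (intro sums_divide sums_diff pi_sums summable_sums summable_pk_power) auto
  moreover have "(pk (Suc i) - pk (Suc i) * v ^ Suc i) / (1 - v) = pk (Suc i) * (\<Sum>j\<le>i. v ^ j)" for i
  proof -
    have "(\<Sum>j\<le>i. v ^ j) = (1 - v ^ Suc i) / (1 - v)"
      using sum_gp_basic[of v i] assms by (simp add: field_simps)
    then show ?thesis
      by (simp add: right_diff_distrib)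
  qed
  ultimately show ?thesis
    by simp
qed

lemma psi_eq_tail_gf:
  assumes "0 < v" "v < 1"
  shows "psi rho d pk v = (1 - v) * (d - v * tail_gf pk v)"
proof -
  define Q where "Q = (\<Sum>i. pk (Suc i) * v ^ Suc i)"
  have "(\<Sum>i. pk (Suc i) * v ^ (Suc i + 1)) = (\<Sum>i. v * (pk (Suc i) * v ^ Suc i))"
    by (simp add: algebra_simps)
  also have "\<dots> = v * Q"
    unfolding Q_def using assms by (intro suminf_mult summable_pk_power) auto
  finally have psi: "psi rho d pk v = d - (rho + d) * v + v * Q"
    by (simp add: psi_def)
  have "tail_gf pk v = (rho - Q) / (1 - v)"
    using sums_unique[OF tail_gf_sums[of v]] assms by (simp add: tail_gf_def Q_def)
  then have tail: "tail_gf pk v * (1 - v) = rho - Q"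
    using assms by simp
  have "(1 - v) * (d - v * tail_gf pk v) = (1 - v) * d - v * (tail_gf pk v * (1 - v))"
    by (simp add: algebra_simps)
  also have "\<dots> = psi rho d pk v"
    unfolding tail psi by (simp add: algebra_simps)
  finally show ?thesis ..
qed

lemma m_integrand_eq:
  assumes "0 < v" "v < 1"
  shows "psi rho d pk v / (c * v * (1 - v)) = d / (c * v) - tail_gf pk v / c"
proof -
  have "psi rho d pk v / (c * v * (1 - v)) = (d - v * tail_gf pk v) / (c * v)"
    using psi_eq_tail_gf[OF assms] assms by simp
  also have "\<dots> = d / (c * v) - tail_gf pk v / c"
    using assms c_pos by (simp add: field_simps)
  finally show ?thesis .
qed

text \<open>Condition (L) enters only here: \<open>\<integral>\<^sub>s\<^sup>1 (1 + v + \<dots> + v\<^sup>k\<^sup>-\<^sup>1) dv \<le> 1 + ln k\<close>.\<close>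

lemma tail_gf_partial_integral_bounds:
  assumes "0 \<le> s" "s \<le> 1"
  shows "0 \<le> (\<Sum>i<k. pk (Suc i) * (\<Sum>j\<le>i. (1 - s ^ Suc j) / Suc j))"
    and "(\<Sum>i<k. pk (Suc i) * (\<Sum>j\<le>i. (1 - s ^ Suc j) / Suc j)) \<le> log_moment"
proof -
  have s_pow: "s ^ Suc j \<le> 1" for j
    by (rule power_le_one[OF assms])
  show "0 \<le> (\<Sum>i<k. pk (Suc i) * (\<Sum>j\<le>i. (1 - s ^ Suc j) / Suc j))"
    using s_pow pk_Suc_nonneg by (intro sum_nonneg mult_nonneg_nonneg divide_nonneg_nonneg) auto
  have "(\<Sum>j\<le>i. (1 - s ^ Suc j) / Suc j) \<le> 1 + ln (real (Suc i))" for i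
    using assms harm_Suc_le_one_plus_ln[of i] sum_mono[of "{..i}" "\<lambda>j. (1 - s ^ Suc j) / Suc j" "\<lambda>j. 1 / real (Suc j)"]
    by (smt (verit) divide_right_mono of_nat_0_le_iff zero_le_power)
  then have "(\<Sum>i<k. pk (Suc i) * (\<Sum>j\<le>i. (1 - s ^ Suc j) / Suc j))
      \<le> (\<Sum>i<k. pk (Suc i) * (1 + ln (real (Suc i))))"
    by (intro sum_mono mult_left_mono pk_Suc_nonneg)
  also have "\<dots> \<le> log_moment"
  proof -
    have sums: "(\<lambda>i. pk (Suc i) * (1 + ln (real (Suc i)))) sums log_moment"
      unfolding log_moment_def distrib_left using sums_add[OF pi_sums summable_sums[OF condL]] by simp
    show ?thesis
      by (rule sum_le_suminf[OF sums_summable[OF sums], unfolded sums_unique[OF sums, symmetric]])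
        (auto intro!: mult_nonneg_nonneg pk_Suc_nonneg)
  qed
  finally show "(\<Sum>i<k. pk (Suc i) * (\<Sum>j\<le>i. (1 - s ^ Suc j) / Suc j)) \<le> log_moment" .
qed

lemma tail_gf_integral:
  assumes "0 < s" "s \<le> 1"
  shows "tail_gf pk integrable_on {s..1}" and "0 \<le> integral {s..1} (tail_gf pk)"
    and "integral {s..1} (tail_gf pk) \<le> log_moment"
proof -
  define f where "f k v = (if v < 1 then \<Sum>i<k. pk (Suc i) * (\<Sum>j\<le>i. v ^ j) else 0)" for k v
  define I where "I k = (\<Sum>i<k. pk (Suc i) * (\<Sum>j\<le>i. (1 - s ^ Suc j) / Suc j))" for k
  have f_integral: "(f k has_integral I k) {s..1}" for k
  proof (rule has_integral_spike[OF negligible_sing[of 1]])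
    show "((\<lambda>v. \<Sum>i<k. pk (Suc i) * (\<Sum>j\<le>i. v ^ j)) has_integral I k) {s..1}"
      unfolding I_def using assms(2) by (intro has_integral_sum has_integral_mult_right has_integral_power_Icc_1) auto
  qed (simp add: f_def)
  have "tail_gf pk integrable_on {s..1} \<and> ((\<lambda>k. integral {s..1} (f k)) \<longlonglongrightarrow> integral {s..1} (tail_gf pk))"
  proof (rule monotone_convergence_increasing)
    show "f k integrable_on {s..1}" for k
      using f_integral by blast
    show "f k x \<le> f (Suc k) x" if "x \<in> {s..1}" for k x
      using that assms pk_Suc_nonneg[of k] by (auto simp: f_def intro!: mult_nonneg_nonneg sum_nonneg)
    show "(\<lambda>k. f k x) \<longlonglongrightarrow> tail_gf pk x" if "x \<in> {s..1}" for x
    proof (cases "x < 1")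
      case True
      then have "summable (\<lambda>i. pk (Suc i) * (\<Sum>j\<le>i. x ^ j))"
        using tail_gf_sums[of x] that assms by (auto intro: sums_summable)
      then show ?thesis
        using True by (simp add: f_def tail_gf_def summable_LIMSEQ)
    qed (simp add: f_def tail_gf_def)
    have "\<bar>integral {s..1} (f k)\<bar> \<le> log_moment" for k
      using integral_unique[OF f_integral[of k]] tail_gf_partial_integral_bounds[of s k] assms
      by (auto simp: I_def)
    then show "bounded (range (\<lambda>k. integral {s..1} (f k)))"
      unfolding bounded_iff by auto
  qed
  moreover have "integral {s..1} (f k) = I k" for k
    using f_integral by (rule integral_unique)
  ultimately have "tail_gf pk integrable_on {s..1}" "I \<longlonglongrightarrow> integral {s..1} (tail_gf pk)"
    by auto
  then show "tail_gf pk integrable_on {s..1}" "0 \<le> integral {s..1} (tail_gf pk)"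
    "integral {s..1} (tail_gf pk) \<le> log_moment"
    using tail_gf_partial_integral_bounds[of s] assms
    by (auto simp: I_def intro: LIMSEQ_le_const LIMSEQ_le_const2)
qed

lemma m_integrand_has_integral:
  assumes "0 < s" "s \<le> 1"
  shows "((\<lambda>v. psi rho d pk v / (c * v * (1 - v))) has_integral
      - (d / c) * ln s - integral {s..1} (tail_gf pk) / c) {s..1}"
proof -
  have "((\<lambda>v. d / (c * v)) has_integral (d / c * ln 1 - d / c * ln s)) {s..1}"
  proof (rule fundamental_theorem_of_calculus[OF assms(2)])
    fix x assume "x \<in> {s..1}"
    then have "0 < x"
      using assms by auto
    then have "((\<lambda>v. d / c * ln v) has_real_derivative d / c * inverse x) (at x within {s..1})"
      by (intro DERIV_cmult DERIV_ln has_field_derivative_at_within)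
    then show "((\<lambda>v. d / c * ln v) has_vector_derivative d / (c * x)) (at x within {s..1})"
      by (simp add: has_real_derivative_iff_has_vector_derivative divide_inverse mult.assoc)
  qed
  moreover have "((\<lambda>v. tail_gf pk v / c) has_integral integral {s..1} (tail_gf pk) / c) {s..1}"
    using tail_gf_integral(1)[OF assms] by (intro has_integral_divide integrable_integral)
  ultimately have "((\<lambda>v. d / (c * v) - tail_gf pk v / c) has_integral
      (d / c * ln 1 - d / c * ln s) - integral {s..1} (tail_gf pk) / c) {s..1}"
    by (rule has_integral_diff)
  then have "((\<lambda>v. psi rho d pk v / (c * v * (1 - v))) has_integral
      (d / c * ln 1 - d / c * ln s) - integral {s..1} (tail_gf pk) / c) {s..1}"
    by (rule has_integral_spike[OF negligible_sing[of 1], rotated]) (use assms m_integrand_eq in auto)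
  then show ?thesis
    by simp
qed

lemma m_eq: "0 < s \<Longrightarrow> s \<le> 1 \<Longrightarrow> m s = - (d / c) * ln s - integral {s..1} (tail_gf pk) / c"
  unfolding mfun_def by (rule integral_unique[OF m_integrand_has_integral])

lemma m_lower_bound: "0 < s \<Longrightarrow> s \<le> 1 \<Longrightarrow> - (d / c) * ln s - log_moment / c \<le> m s"
  using m_eq tail_gf_integral(3)[of s] c_pos by (simp add: divide_right_mono)

lemma continuous_on_m: "0 < s \<Longrightarrow> s \<le> 1 \<Longrightarrow> continuous_on {s..1} m"
  unfolding mfun_def using m_integrand_has_integral
  by (intro indefinite_integral_continuous_1') blast

lemma isCont_m: "0 < x \<Longrightarrow> x < 1 \<Longrightarrow> isCont m x"
  using continuous_on_interior[OF continuous_on_m[of "x / 2"], of x] by simp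

lemma exp_m_integrable: "0 < s \<Longrightarrow> s \<le> 1 \<Longrightarrow> (\<lambda>v. exp (m v)) integrable_on {s..1}"
  using continuous_on_m by (intro integrable_continuous_real continuous_intros)

lemma theta_one [simp]: "\<theta> 1 = 0"
  by (simp add: theta_def)

lemma continuous_on_theta: "0 < s \<Longrightarrow> s \<le> 1 \<Longrightarrow> continuous_on {s..1} \<theta>"
  unfolding theta_def[abs_def] by (rule indefinite_integral_continuous_1'[OF exp_m_integrable])

lemma theta_has_real_derivative:
  assumes x: "0 < x" "x < 1"
  shows "(\<theta> has_real_derivative - exp (m x)) (at x)"
proof -
  define s where "s = x / 2"
  have s: "0 < s" "s < x"
    using x by (auto simp: s_def)
  have "((\<lambda>y. integral {s..y} (\<lambda>v. exp (m v))) has_vector_derivative exp (m x)) (at x within {s..1})"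
    using s x continuous_on_m[of s] by (intro integral_has_vector_derivative continuous_intros) auto
  then have "((\<lambda>y. integral {s..y} (\<lambda>v. exp (m v))) has_real_derivative exp (m x)) (at x)"
    using s x by (simp add: has_real_derivative_iff_has_vector_derivative at_within_Icc_at)
  then have "((\<lambda>y. integral {s..1} (\<lambda>v. exp (m v)) - integral {s..y} (\<lambda>v. exp (m v)))
      has_real_derivative - exp (m x)) (at x)"
    using DERIV_diff[OF DERIV_const] by fastforce
  then show ?thesis
  proof (rule has_field_derivative_transform_within_open)
    show "open {s<..<1}" "x \<in> {s<..<1}"
      using s x by auto
    show "integral {s..1} (\<lambda>v. exp (m v)) - integral {s..y} (\<lambda>v. exp (m v)) = \<theta> y"
      if "y \<in> {s<..<1}" for y
      using that s exp_m_integrable[of s] Henstock_Kurzweil_Integration.integral_combine[of s y 1 "\<lambda>v. exp (m v)"]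
      by (simp add: theta_def)
  qed
qed

lemma theta_strict_antimono:
  assumes "0 < s" "s < s'" "s' \<le> 1"
  shows "\<theta> s' < \<theta> s"
proof (rule DERIV_neg_imp_decreasing_open[OF assms(2)])
  show "\<exists>y. (\<theta> has_real_derivative y) (at x) \<and> y < 0" if "s < x" "x < s'" for x
    using that assms theta_has_real_derivative[of x] by (intro exI[of _ "- exp (m x)"]) auto
  show "continuous_on {s..s'} \<theta>"
    by (rule continuous_on_subset[OF continuous_on_theta[of s]]) (use assms in auto)
qed

lemma theta_pos: "0 < s \<Longrightarrow> s < 1 \<Longrightarrow> 0 < \<theta> s"
  using theta_strict_antimono[of s 1] by simp

lemma theta_antimono: "0 < s \<Longrightarrow> s \<le> s' \<Longrightarrow> s' \<le> 1 \<Longrightarrow> \<theta> s' \<le> \<theta> s"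
  using theta_strict_antimono[of s s'] by (cases "s = s'") auto

lemma theta_inj: "0 < s \<Longrightarrow> s \<le> 1 \<Longrightarrow> 0 < s' \<Longrightarrow> s' \<le> 1 \<Longrightarrow> \<theta> s = \<theta> s' \<Longrightarrow> s = s'"
  by (metis linorder_neqE_linordered_idom order_less_irrefl theta_strict_antimono)

lemma nn_integral_eq_theta:
  assumes "0 < s" "s \<le> 1"
  shows "(\<integral>\<^sup>+v. ennreal (indicator {s..1} v * exp (m v)) \<partial>lborel) = ennreal (\<theta> s)"
proof (rule nn_integral_has_integral_lborel)
  have "(\<lambda>v. indicator {s..1} v *\<^sub>R exp (m v)) \<in> borel_measurable borel"
    using assms continuous_on_m[of s] by (intro borel_measurable_continuous_on_indicator continuous_intros) auto
  then show "(\<lambda>v. indicator {s..1} v * exp (m v)) \<in> borel_measurable borel"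
    by simp
  have "((\<lambda>v. if v \<in> {s..1} then exp (m v) else 0) has_integral \<theta> s) UNIV"
    unfolding has_integral_restrict_UNIV theta_def using exp_m_integrable[OF assms]
    by (rule integrable_integral)
  moreover have "(\<lambda>v. indicator {s..1} v * exp (m v)) = (\<lambda>v. if v \<in> {s..1} then exp (m v) else 0)"
    by (auto simp: indicator_def)
  ultimately show "((\<lambda>v. indicator {s..1} v * exp (m v)) has_integral \<theta> s) UNIV"
    by simp
qed (auto simp: indicator_def)

lemma theta_le_xi: "0 < s \<Longrightarrow> s \<le> 1 \<Longrightarrow> ennreal (\<theta> s) \<le> X"
  unfolding xi_def nn_integral_eq_theta[symmetric]
  by (intro nn_integral_mono ennreal_leI) (auto simp: indicator_def)

lemma SUP_ennreal_indicator_Icc_inverse_Suc: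
  fixes y :: real
  assumes "0 \<le> y"
  shows "(SUP n. ennreal (indicator {1 / Suc n..1} v * y)) = ennreal (indicator {0<..1} v * y)"
proof (rule LIMSEQ_unique[OF LIMSEQ_SUP])
  show "incseq (\<lambda>n. ennreal (indicator {1 / Suc n..1} v * y))"
    using assms by (intro incseq_SucI ennreal_leI)
      (auto simp: indicator_def frac_le intro: order_trans[rotated])
  have "eventually (\<lambda>n. indicator {1 / Suc n..1} v = (indicator {0<..1} v :: real)) sequentially"
  proof (cases "0 < v")
    case True
    then obtain N where "inverse (real (Suc N)) < v"
      using reals_Archimedean by blast
    then have "1 / real (Suc n) < v" if "N \<le> n" for n
      using that frac_le[of 1 1 "real (Suc N)" "real (Suc n)"] by (simp add: inverse_eq_divide)
    then have "eventually (\<lambda>n. 1 / real (Suc n) < v) sequentially"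
      by (auto simp: eventually_sequentially)
    then show ?thesis
      by (rule eventually_mono) (use True in \<open>auto simp: indicator_def\<close>)
  next
    case False
    then have "indicator {1 / Suc n..1} v = (indicator {0<..1} v :: real)" for n
      using order_trans[of "1 / real (Suc n)" v 0] by (auto simp: indicator_def)
    then show ?thesis
      by simp
  qed
  then show "(\<lambda>n. ennreal (indicator {1 / Suc n..1} v * y)) \<longlonglongrightarrow> ennreal (indicator {0<..1} v * y)"
    by (rule tendsto_eventually[OF eventually_mono]) simp
qed

lemma xi_eq_SUP: "X = (SUP n. ennreal (\<theta> (1 / Suc n)))"
proof -
  define F where "F n v = ennreal (indicator {1 / Suc n..1} v * exp (m v))" for n v
  have "(SUP n. F n v) = ennreal (indicator {0<..1} v * exp (m v))" for v
    unfolding F_def by (rule SUP_ennreal_indicator_Icc_inverse_Suc) simp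
  then have "X = (\<integral>\<^sup>+v. (SUP n. F n v) \<partial>lborel)"
    by (simp add: xi_def)
  also have "\<dots> = (SUP n. integral\<^sup>N lborel (F n))"
  proof (rule nn_integral_monotone_convergence_SUP)
    show "incseq F"
      by (intro incseq_SucI le_funI ennreal_leI)
        (auto simp: F_def indicator_def frac_le intro: order_trans[rotated])
    have "(\<lambda>v. indicator {1 / Suc n..1} v *\<^sub>R exp (m v)) \<in> borel_measurable borel" for n
      using continuous_on_m[of "1 / Suc n"] by (intro borel_measurable_continuous_on_indicator continuous_intros) auto
    then show "F n \<in> borel_measurable lborel" for n
      by (simp add: F_def[abs_def])
  qed
  also have "\<dots> = (SUP n. ennreal (\<theta> (1 / Suc n)))"
    unfolding F_def by (subst nn_integral_eq_theta) auto
  finally show ?thesis .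
qed

lemma theta_lt_xi:
  assumes "0 < s" "s < 1"
  shows "ennreal (\<theta> s) < X"
proof -
  have "ennreal (\<theta> s) < ennreal (\<theta> (s / 2))"
    using theta_strict_antimono[of "s / 2" s] theta_pos[of s] assms by (simp add: ennreal_less_iff)
  also have "\<dots> \<le> X"
    using theta_le_xi[of "s / 2"] assms by simp
  finally show ?thesis .
qed

lemma theta_in_Dom: "0 < s \<Longrightarrow> s < 1 \<Longrightarrow> \<theta> s \<in> D"
  using theta_lt_xi theta_pos unfolding Dom_def by auto

lemma Dom_subset_theta_image:
  assumes t: "t \<in> D"
  obtains s where "0 < s" "s < 1" "\<theta> s = t"
proof -
  have t0: "0 < t" and "ennreal t < X"
    using t by (auto simp: Dom_def)
  then obtain n where "ennreal t < ennreal (\<theta> (1 / Suc n))"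
    unfolding xi_eq_SUP less_SUP_iff by blast
  then have "t < \<theta> (1 / Suc n)"
    using t0 by (simp add: ennreal_less_iff)
  then obtain s where s: "1 / Suc n \<le> s" "s \<le> 1" "\<theta> s = t"
    using IVT2'[of \<theta> 1 t "1 / Suc n"] t0 continuous_on_theta[of "1 / Suc n"] by auto
  moreover have "0 < s"
    using s(1) by (rule order_less_le_trans[rotated]) simp
  moreover have "s \<noteq> 1"
    using s(3) t0 by auto
  ultimately show ?thesis
    using that by simp
qed

lemma phi_theta: "0 < s \<Longrightarrow> s \<le> 1 \<Longrightarrow> \<phi> (\<theta> s) = s"
  unfolding phi_def by (rule the_equality) (auto intro: theta_inj)

lemma phi_on_Dom:
  assumes "t \<in> D"
  shows "0 < \<phi> t" "\<phi> t < 1" "\<theta> (\<phi> t) = t"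
  using Dom_subset_theta_image[OF assms] phi_theta by (metis less_imp_le)+

lemma Dom_cases:
  obtains "X = \<infinity>" "D = {0<..}" | x where "0 < x" "X = ennreal x" "D = {0<..<x}"
proof (cases X rule: ennreal_cases)
  case (real x)
  then have "0 < x"
    using theta_le_xi[of "1/2"] theta_pos[of "1/2"] by simp
  moreover have "D = {0<..<x}"
    using real by (auto simp: Dom_def ennreal_less_iff)
  ultimately show ?thesis
    using real that(2) by blast
next
  case top
  then show ?thesis
    using that(1) by (auto simp: Dom_def)
qed

lemma open_Dom: "open D"
  by (cases rule: Dom_cases) auto

lemma is_interval_Dom: "is_interval D"
  by (cases rule: Dom_cases) (auto simp: is_interval_convex_1)

lemma Dom_nonempty: "D \<noteq> {}"
  using theta_in_Dom[of "1/2"] by auto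

lemma eventually_to_xi:
  assumes "T0 \<in> D"
  shows "eventually (\<lambda>T. T \<in> D \<and> T0 < T) (to_xi rho d c pk)"
proof (cases rule: Dom_cases)
  case 1
  have "eventually (\<lambda>T. T0 < T) at_top"
    by (rule eventually_gt_at_top)
  then have "eventually (\<lambda>T. T \<in> D \<and> T0 < T) at_top"
    by (rule eventually_mono) (use 1 assms in auto)
  then show ?thesis
    using 1 by (simp add: to_xi_def)
next
  case (2 x)
  then have "eventually (\<lambda>T. T \<in> {T0<..<x}) (at_left x)"
    using assms by (intro eventually_at_left_real) auto
  then have "eventually (\<lambda>T. T \<in> D \<and> T0 < T) (at_left x)"
    by (rule eventually_mono) (use 2 assms in auto)
  then show ?thesis
    using 2 by (simp add: to_xi_def)
qed

lemma isCont_phi: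
  assumes t: "t \<in> D"
  shows "isCont \<phi> t"
proof -
  define s where "s = \<phi> t"
  have s: "0 < s" "s < 1" "\<theta> s = t"
    using phi_on_Dom[OF t] by (auto simp: s_def)
  have "isCont \<phi> (\<theta> s)"
  proof (rule isCont_inverse_function[where f = \<theta> and g = \<phi> and x = s and d = "min (s / 2) ((1 - s) / 2)"])
    show "0 < min (s / 2) ((1 - s) / 2)"
      using s by simp
    fix z assume "\<bar>z - s\<bar> \<le> min (s / 2) ((1 - s) / 2)"
    then have "0 < z" "z < 1"
      using s by (auto simp: abs_le_iff min_def split: if_splits)
    then show "\<phi> (\<theta> z) = z" "isCont \<theta> z"
      using phi_theta theta_has_real_derivative[THEN DERIV_isCont] by auto
  qed
  then show ?thesis
    using s by simp
qed

lemma phi_has_real_derivative: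
  assumes t: "t \<in> D"
  shows "(\<phi> has_real_derivative - exp (- m (\<phi> t))) (at t)"
proof -
  define s where "s = \<phi> t"
  have s: "0 < s" "s < 1" "\<theta> s = t"
    using phi_on_Dom[OF t] by (auto simp: s_def)
  have "(\<phi> has_real_derivative inverse (- exp (m s))) (at t)"
  proof (rule DERIV_inverse_function[where a = 0 and b = "\<theta> (s / 2)"])
    show "(\<theta> has_real_derivative - exp (m s)) (at (\<phi> t))"
      using theta_has_real_derivative s by (simp add: s_def)
    show "0 < t" "t < \<theta> (s / 2)"
      using t theta_strict_antimono[of "s / 2" s] s by (auto simp: Dom_def)
    show "\<theta> (\<phi> y) = y" if "0 < y" "y < \<theta> (s / 2)" for y
    proof -
      have "ennreal y < ennreal (\<theta> (s / 2))"
        using that by (simp add: ennreal_less_iff)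
      also have "\<dots> < X"
        using theta_lt_xi[of "s / 2"] s by simp
      finally have "ennreal y < X" .
      then show ?thesis
        using that phi_on_Dom(3) by (simp add: Dom_def)
    qed
  qed (use isCont_phi[OF t] in auto)
  then show ?thesis
    by (simp add: s_def exp_minus)
qed

lemma rfun_squared:
  assumes t: "t \<in> D"
  shows "rfun rho d c pk t ^ 2 = exp (- m (\<phi> t)) ^ 2 / (c * \<phi> t * (1 - \<phi> t))"
proof -
  have "deriv \<phi> t = - exp (- m (\<phi> t))"
    by (rule DERIV_imp_deriv[OF phi_has_real_derivative[OF t]])
  moreover have "0 \<le> c * \<phi> t * (1 - \<phi> t)"
    using phi_on_Dom[OF t] c_pos by simp
  ultimately show ?thesis
    by (simp add: rfun_def power_divide)
qed

lemma rfun_squared_pos: "t \<in> D \<Longrightarrow> 0 < rfun rho d c pk t ^ 2"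
  using rfun_squared[of t] phi_on_Dom[of t] c_pos by simp

lemma continuous_on_rfun_squared: "continuous_on D (\<lambda>t. rfun rho d c pk t ^ 2)"
proof -
  have "isCont (\<lambda>t. exp (- m (\<phi> t)) ^ 2 / (c * \<phi> t * (1 - \<phi> t))) t" if t: "t \<in> D" for t
    using isCont_phi[OF t] isCont_o2[OF isCont_phi[OF t] isCont_m[OF phi_on_Dom(1,2)[OF t]]]
      phi_on_Dom[OF t] c_pos
    by (intro continuous_intros) auto
  then have "continuous_on D (\<lambda>t. exp (- m (\<phi> t)) ^ 2 / (c * \<phi> t * (1 - \<phi> t)))"
    by (simp add: continuous_at_imp_continuous_on)
  then show ?thesis
    by (rule continuous_on_eq) (simp add: rfun_squared)
qed

lemma phi_tendsto_0: "filterlim \<phi> (at_right 0) (to_xi rho d c pk)"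
proof -
  have "eventually (\<lambda>T. \<phi> T < a) (to_xi rho d c pk)" if "0 < a" for a
  proof -
    define e where "e = min a (1/2)"
    have e: "0 < e" "e < 1" "e \<le> a"
      using that by (auto simp: e_def)
    have "\<phi> T < a" if "T \<in> D" "\<theta> e < T" for T
    proof (rule ccontr)
      assume "\<not> \<phi> T < a"
      then have "\<theta> (\<phi> T) \<le> \<theta> e"
        using theta_antimono[of e "\<phi> T"] e phi_on_Dom[OF \<open>T \<in> D\<close>] by auto
      then show False
        using that phi_on_Dom(3) by simp
    qed
    then show ?thesis
      using eventually_to_xi[OF theta_in_Dom[OF e(1,2)]] by (auto elim: eventually_mono)
  qed
  moreover have pos: "eventually (\<lambda>T. 0 < \<phi> T) (to_xi rho d c pk)"
    using eventually_to_xi[OF theta_in_Dom[of "1/2"]] phi_on_Dom(1) by (auto elim: eventually_mono)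
  ultimately have "(\<phi> \<longlongrightarrow> 0) (to_xi rho d c pk)"
  proof (intro order_tendstoI)
    show "eventually (\<lambda>T. a < \<phi> T) (to_xi rho d c pk)" if "a < 0" for a
      using pos by eventually_elim (use that in auto)
  qed
  with pos show ?thesis
    unfolding filterlim_at by (auto elim: eventually_mono)
qed

text \<open>Since \<open>e\<^sup>-\<^sup>m\<^sup>(\<^sup>v\<^sup>) \<le> K v\<^sup>a\<close> with \<open>a = d/c\<close> and \<open>K = exp (log_moment / c)\<close>, and \<open>(v\<^sup>a/(1-v))' \<ge> a v\<^sup>a/(v(1-v))\<close>,
  the function \<open>(qK/d) \<phi>\<^sup>a/(1-\<phi>)\<close> is a nonnegative supersolution: its derivative is at most \<open>-q r\<^sup>2\<close>.\<close>

definition "supersolution q t = q * exp (log_moment / c) / d * (\<phi> t powr (d / c) / (1 - \<phi> t))"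

lemma exp_neg_m_le:
  assumes "0 < v" "v \<le> 1"
  shows "exp (- m v) \<le> exp (log_moment / c) * v powr (d / c)"
proof -
  have "exp (- m v) \<le> exp (d / c * ln v + log_moment / c)"
    using m_lower_bound[OF assms] by simp
  also have "\<dots> = exp (log_moment / c) * v powr (d / c)"
    using assms by (simp add: powr_def exp_add)
  finally show ?thesis .
qed

lemma supersolution_nonneg: "0 \<le> q \<Longrightarrow> t \<in> D \<Longrightarrow> 0 \<le> supersolution q t"
  using phi_on_Dom[of t] d_pos by (simp add: supersolution_def)

lemma supersolution_has_real_derivative:
  assumes q: "0 \<le> q" and t: "t \<in> D"
  shows "\<exists>h'. (supersolution q has_real_derivative h') (at t) \<and> h' \<le> - (q * rfun rho d c pk t ^ 2)"
proof -
  define v where "v = \<phi> t"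
  define a where "a = d / c"
  define K where "K = exp (log_moment / c)"
  define P where "P = v powr a"
  define E where "E = exp (- m v)"
  define G' where "G' = a * P / (v * (1 - v)) + P / (1 - v)\<^sup>2"
  have v: "0 < v" "v < 1"
    using phi_on_Dom[OF t] by (auto simp: v_def)
  have pos: "0 < a" "0 < K" "0 < P" "0 < E"
    using d_pos c_pos v by (auto simp: a_def K_def P_def E_def)
  have "((\<lambda>v. v powr a / (1 - v)) has_real_derivative G') (at (\<phi> t))"
    unfolding G'_def P_def v_def by (rule has_real_derivative_powr_div_one_minus) (use v in \<open>auto simp: v_def\<close>)
  from DERIV_chain2[OF this phi_has_real_derivative[OF t]]
  have "(supersolution q has_real_derivative q * K / d * (G' * - E)) (at t)"
    unfolding supersolution_def[abs_def] K_def E_def a_def v_def by (rule DERIV_cmult)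
  moreover have "q * rfun rho d c pk t ^ 2 \<le> q * K / d * G' * E"
  proof -
    have "q * rfun rho d c pk t ^ 2 = q * E * E / (c * v * (1 - v))"
      using rfun_squared[OF t] by (simp add: E_def v_def power2_eq_square)
    also have "\<dots> \<le> q * (K * P) * E / (c * v * (1 - v))"
      using exp_neg_m_le[of v] q pos c_pos v
      by (intro divide_right_mono mult_right_mono mult_left_mono) (auto simp: E_def K_def P_def a_def)
    also have "\<dots> = q * K / d * (a * P / (v * (1 - v))) * E"
      using d_pos c_pos v by (simp add: a_def field_simps)
    also have "\<dots> \<le> q * K / d * G' * E"
      using q pos d_pos v by (intro mult_right_mono mult_left_mono) (auto simp: G'_def)
    finally show ?thesis .
  qed
  ultimately show ?thesis
    by (intro exI[of _ "q * K / d * (G' * - E)"]) auto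
qed

lemma supersolution_tendsto_0: "(supersolution q \<longlongrightarrow> 0) (to_xi rho d c pk)"
proof -
  have "((\<lambda>v. v powr (d / c) / (1 - v)) \<longlongrightarrow> 0) (at_right 0)"
    using d_pos c_pos by real_asymp
  then have "((\<lambda>t. \<phi> t powr (d / c) / (1 - \<phi> t)) \<longlongrightarrow> 0) (to_xi rho d c pk)"
    by (rule filterlim_compose[OF _ phi_tendsto_0])
  then show ?thesis
    unfolding supersolution_def[abs_def] by (intro tendsto_mult_right_zero)
qed

end

section \<open>The solutions \<open>\<kappa>\<^sub>T\<close> of \<open>y' - y\<^sup>2 = -q r\<^sup>2\<close>\<close>

context psi_setting
begin

lemma riccati_q_rfun_squared: "0 < q \<Longrightarrow> riccati D (\<lambda>t. q * rfun rho d c pk t ^ 2)"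
  using open_Dom is_interval_Dom rfun_squared_pos by unfold_locales (auto intro: mult_pos_pos)

lemma riccati_sol_exists:
  assumes "0 < q" "T \<in> D"
  shows "\<exists>y. riccati_sol rho d c pk q D y \<and> y T = 0"
proof -
  interpret linear_second_order D "\<lambda>t. q * rfun rho d c pk t ^ 2" T
    using assms open_Dom is_interval_Dom continuous_on_rfun_squared rfun_squared_pos
    by unfold_locales (auto intro: less_imp_le continuous_on_mult_left)
  show ?thesis
    using riccati_solution_exists by (simp add: riccati_sol_def)
qed

lemma riccati_sol_family:
  assumes q: "0 < q" and \<kappa>: "\<forall>T\<in>D. riccati_sol rho d c pk q D (\<kappa> T) \<and> \<kappa> T T = 0"
  shows "\<forall>T\<in>D. \<forall>T'\<in>D. \<forall>t\<in>D. T < T' \<longrightarrow> \<kappa> T t \<le> \<kappa> T' t"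
    and "\<forall>T\<in>D. \<forall>t\<in>D. \<kappa> T t \<le> supersolution q t"
    and "\<exists>w. (\<forall>t\<in>D. ((\<lambda>T. \<kappa> T t) \<longlongrightarrow> w t) (to_xi rho d c pk)) \<and> (\<forall>t\<in>D. 0 < w t)
      \<and> (w \<longlongrightarrow> 0) (to_xi rho d c pk)"
proof -
  interpret riccati D "\<lambda>t. q * rfun rho d c pk t ^ 2"
    using riccati_q_rfun_squared[OF q] .
  have sol: "\<And>T. T \<in> D \<Longrightarrow> solves (\<kappa> T) \<and> \<kappa> T T = 0"
    using \<kappa> by (simp add: riccati_sol_def solves_def)
  note super = supersolution_has_real_derivative[OF less_imp_le[OF q]]
    supersolution_nonneg[OF less_imp_le[OF q]]
  show "\<forall>T\<in>D. \<forall>T'\<in>D. \<forall>t\<in>D. T < T' \<longrightarrow> \<kappa> T t \<le> \<kappa> T' t"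
    using sol solves_strict_mono_zero by (blast intro: less_imp_le)
  show "\<forall>T\<in>D. \<forall>t\<in>D. \<kappa> T t \<le> supersolution q t"
    using sol solves_le_supersolution[OF _ _ _ _ super] by blast
  show "\<exists>w. (\<forall>t\<in>D. ((\<lambda>T. \<kappa> T t) \<longlongrightarrow> w t) (to_xi rho d c pk)) \<and> (\<forall>t\<in>D. 0 < w t)
      \<and> (w \<longlongrightarrow> 0) (to_xi rho d c pk)"
    by (rule solutions_tendsto[OF sol Dom_nonempty super eventually_to_xi supersolution_tendsto_0])
qed

end

theorem lemma4p3:
  fixes rho d c q :: real and pk :: "nat \<Rightarrow> real"
  assumes rho_pos: "rho > 0" and d_pos: "d > 0" and c_pos: "c > 0"
    and pi_nonneg: "\<And>k. k \<ge> 1 \<Longrightarrow> pk k \<ge> 0"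
    and pi_sums: "(\<lambda>i. pk (Suc i)) sums rho"
    and condL: "summable (\<lambda>i. pk (Suc i) * ln (real (Suc i)))"
    and q_pos: "q > 0"
  shows "(\<forall>T\<in>Dom rho d c pk. \<exists>y. riccati_sol rho d c pk q (Dom rho d c pk) y \<and> y T = 0)
    \<and> (\<forall>\<kappa> :: real \<Rightarrow> real \<Rightarrow> real.
         (\<forall>T\<in>Dom rho d c pk. riccati_sol rho d c pk q (Dom rho d c pk) (\<kappa> T) \<and> \<kappa> T T = 0) \<longrightarrow>
         (\<forall>T\<in>Dom rho d c pk. \<forall>T'\<in>Dom rho d c pk. \<forall>t\<in>Dom rho d c pk.
              T < T' \<longrightarrow> \<kappa> T t \<le> \<kappa> T' t)
       \<and> (\<exists>B :: real \<Rightarrow> real. \<forall>T\<in>Dom rho d c pk. \<forall>t\<in>Dom rho d c pk. \<kappa> T t \<le> B t)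
       \<and> (\<exists>w :: real \<Rightarrow> real.
            (\<forall>t\<in>Dom rho d c pk. ((\<lambda>T. \<kappa> T t) \<longlongrightarrow> w t) (to_xi rho d c pk))
          \<and> (\<forall>t\<in>Dom rho d c pk. w t > 0)
          \<and> (w \<longlongrightarrow> 0) (to_xi rho d c pk)))"
proof -
  interpret psi_setting rho d c pk
    using d_pos c_pos pi_nonneg pi_sums condL by unfold_locales
  show ?thesis
    using riccati_sol_exists[OF q_pos] riccati_sol_family[OF q_pos] by blast
qed

end
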